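(* Let $P,N>0$. If $\mathcal{C}$ is a $(P,N,1)$-sphere packing, then it is also a $(P,N',L)$-multiple packing for any $0\le N'<\frac{2(L-1)N}{L}$ and any $L\in\mathbb{Z}_{\ge2}$.
   Context: $\mathcal{B}^n(y,r)$ is the closed Euclidean ball in $\mathbb{R}^n$ of radius $r$ centered at $y$, $\mathcal{B}^n(r)=\mathcal{B}^n(0,r)$. For $P,N>0$ and $K\in\mathbb{Z}_{\ge1}$, a set $\mathcal{C}\subseteq\mathcal{B}^n(\sqrt{nP})$ is a $(P,N,K)$-multiple packing if $|\mathcal{C}\cap\mathcal{B}^n(y,\sqrt{nN})|\le K$ for every $y\in\mathbb{R}^n$; for $K=1$ it is called a $(P,N,1)$-sphere packing. *)

theory Defs
  imports "HOL-Analysis.Analysis"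
begin

text \<open>Vectors in R^n are modelled as real ^ 'n, with n = CARD('n).\<close>

definition multiple_packing :: "real \<Rightarrow> real \<Rightarrow> nat \<Rightarrow> (real ^ 'n) set \<Rightarrow> bool" where
  "multiple_packing P N K C \<longleftrightarrow>
     C \<subseteq> cball 0 (sqrt (real CARD('n) * P)) \<and>
     (\<forall>y :: real ^ 'n. finite (C \<inter> cball y (sqrt (real CARD('n) * N))) \<and>
                        card (C \<inter> cball y (sqrt (real CARD('n) * N))) \<le> K)"

abbreviation sphere_packing :: "real \<Rightarrow> real \<Rightarrow> (real ^ 'n) set \<Rightarrow> bool" where
  "sphere_packing P N C \<equiv> multiple_packing P N 1 C"

end

theory Submission
  imports Defs
begin

text \<open>Two distinct points of a sphere packing are more than \<open>2 sqrt(nN)\<close> apart, since otherwise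
  the ball of radius \<open>sqrt(nN)\<close> around their midpoint contains both. On the other hand, for
  \<open>L\<close> points in a ball of radius \<open>\<rho>\<close> around \<open>y\<close>, the sum of the squared distances over all
  ordered pairs equals \<open>2L \<Sum>|x - y|\<^sup>2 - 2|\<Sum>(x - y)|\<^sup>2 \<le> 2L\<^sup>2\<rho>\<^sup>2\<close>, while separation makes it
  exceed \<open>L(L - 1)d\<^sup>2\<close>. With \<open>d = 2 sqrt(nN)\<close> and \<open>\<rho> = sqrt(nN')\<close> this forces
  \<open>N' > 2(L - 1)N/L\<close>.\<close>

lemma dist_gt_if_cball_card_le_1:
  fixes C :: "'a::real_normed_vector set"
  assumes "\<And>y. finite (C \<inter> cball y r) \<and> card (C \<inter> cball y r) \<le> 1"
    and "x \<in> C" and "z \<in> C" and "x \<noteq> z"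
  shows "2 * r < dist x z"
proof (rule ccontr)
  assume "\<not> 2 * r < dist x z"
  then have "x \<in> C \<inter> cball (midpoint x z) r" "z \<in> C \<inter> cball (midpoint x z) r"
    using assms(2,3) by (auto simp: dist_midpoint dist_commute)
  with assms(1)[of "midpoint x z"] assms(4) show False
    using card_le_Suc0_iff_eq[of "C \<inter> cball (midpoint x z) r"] by (simp only: One_nat_def) blast
qed

lemma sum_sum_norm_diff_sq:
  fixes S :: "'a::real_inner set"
  assumes "finite S"
  shows "(\<Sum>x\<in>S. \<Sum>z\<in>S. (norm (x - z))\<^sup>2)
     = 2 * real (card S) * (\<Sum>x\<in>S. (norm (x - y))\<^sup>2) - 2 * (norm (\<Sum>x\<in>S. x - y))\<^sup>2"
proof -
  define a where "a x = (norm (x - y))\<^sup>2" for x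
  have "(\<Sum>x\<in>S. \<Sum>z\<in>S. (norm (x - z))\<^sup>2)
      = (\<Sum>x\<in>S. \<Sum>z\<in>S. a x + a z - 2 * ((z - y) \<bullet> (x - y)))"
    unfolding a_def by (intro sum.cong refl)
      (simp add: power2_norm_eq_inner inner_diff_left inner_diff_right inner_commute)
  also have "\<dots> = (\<Sum>x\<in>S. real (card S) * a x + sum a S - 2 * (\<Sum>z\<in>S. (z - y) \<bullet> (x - y)))"
    by (simp only: sum.distrib sum_subtractf sum_distrib_left[symmetric] sum_constant)
  also have "\<dots> = 2 * real (card S) * sum a S - 2 * (\<Sum>x\<in>S. \<Sum>z\<in>S. (z - y) \<bullet> (x - y))"
    by (simp only: sum.distrib sum_subtractf sum_distrib_left[symmetric] sum_constant)
  also have "(\<Sum>x\<in>S. \<Sum>z\<in>S. (z - y) \<bullet> (x - y)) = (norm (\<Sum>x\<in>S. x - y))\<^sup>2"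
    by (simp only: power2_norm_eq_inner inner_sum_left inner_sum_right)
  finally show ?thesis
    unfolding a_def .
qed

lemma sum_norm_diff_sq_gt_if_separated:
  fixes S :: "'a::real_normed_vector set"
  assumes "finite S" and "2 \<le> card S" and "0 \<le> d"
    and sep: "\<And>x z. x \<in> S \<Longrightarrow> z \<in> S \<Longrightarrow> x \<noteq> z \<Longrightarrow> d < dist x z"
    and "x \<in> S"
  shows "(real (card S) - 1) * d\<^sup>2 < (\<Sum>z\<in>S. (norm (x - z))\<^sup>2)"
proof -
  have "(real (card S) - 1) * d\<^sup>2 = (\<Sum>z\<in>S - {x}. d\<^sup>2)"
    using assms(1,2,5) by (simp add: of_nat_diff)
  also have "\<dots> < (\<Sum>z\<in>S - {x}. (norm (x - z))\<^sup>2)"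
  proof (rule sum_strict_mono)
    show "S - {x} \<noteq> {}"
    proof
      assume "S - {x} = {}"
      then have "S \<subseteq> {x}"
        by blast
      then show False
        using assms(2) card_mono[of "{x}" S] by simp
    qed
    show "d\<^sup>2 < (norm (x - z))\<^sup>2" if "z \<in> S - {x}" for z
      using sep[of x z] that assms(3,5) by (auto simp: dist_norm intro: power_strict_mono)
  qed (use assms(1) in simp)
  also have "\<dots> = (\<Sum>z\<in>S. (norm (x - z))\<^sup>2)"
    using sum.remove[OF assms(1,5), of "\<lambda>z. (norm (x - z))\<^sup>2"] by simp
  finally show ?thesis .
qed

lemma card_separated_in_cball:
  fixes S :: "'a::real_inner set"
  assumes "finite S" and "2 \<le> card S" and "S \<subseteq> cball y \<rho>" and "0 \<le> d"
    and "\<And>x z. x \<in> S \<Longrightarrow> z \<in> S \<Longrightarrow> x \<noteq> z \<Longrightarrow> d < dist x z"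
  shows "(real (card S) - 1) * d\<^sup>2 < 2 * real (card S) * \<rho>\<^sup>2"
proof -
  let ?k = "real (card S)"
  have "S \<noteq> {}" and "?k > 0"
    using assms(2) by auto
  have "?k * ((?k - 1) * d\<^sup>2) = (\<Sum>x\<in>S. (?k - 1) * d\<^sup>2)"
    by simp
  also have "\<dots> < (\<Sum>x\<in>S. \<Sum>z\<in>S. (norm (x - z))\<^sup>2)"
    using sum_norm_diff_sq_gt_if_separated[OF assms(1,2,4,5)] assms(1) \<open>S \<noteq> {}\<close>
    by (intro sum_strict_mono)
  also have "\<dots> \<le> 2 * ?k * (\<Sum>x\<in>S. (norm (x - y))\<^sup>2)"
    unfolding sum_sum_norm_diff_sq[OF assms(1), of y] by simp
  also have "\<dots> \<le> 2 * ?k * (\<Sum>x\<in>S. \<rho>\<^sup>2)"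
    using assms(3) by (intro mult_left_mono sum_mono power_mono)
      (auto simp: dist_norm norm_minus_commute)
  also have "\<dots> = ?k * (2 * ?k * \<rho>\<^sup>2)"
    by simp
  finally show ?thesis
    using \<open>?k > 0\<close> by simp
qed

lemma obtain_finite_subset_with_card_n:
  assumes "infinite A \<or> n \<le> card A"
  obtains S where "S \<subseteq> A" and "finite S" and "card S = n"
proof (cases "finite A")
  case True
  with assms obtain S where "S \<subseteq> A" "card S = n"
    using obtain_subset_with_card_n by blast
  with True show thesis
    using that finite_subset by blast
next
  case False
  then show thesis
    using infinite_arbitrarily_large that by blast
qed

theorem mainTheorem9:
  fixes C :: "(real ^ 'n) set" and P N N' :: real and L :: nat
  assumes "P > 0" and "N > 0"
    and "sphere_packing P N C"
    and "L \<ge> 2"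
    and "0 \<le> N'" and "N' < 2 * (real L - 1) * N / real L"
  shows "multiple_packing P N' L C"
proof -
  define n where "n = real CARD('n)"
  have "n > 0"
    unfolding n_def by simp
  have sep: "2 * sqrt (n * N) < dist x z" if "x \<in> C" "z \<in> C" "x \<noteq> z" for x z
    using dist_gt_if_cball_card_le_1[OF _ that] assms(3) unfolding multiple_packing_def n_def by blast
  have "finite A \<and> card A \<le> L" if A: "A = C \<inter> cball y (sqrt (n * N'))" for A y
  proof (rule ccontr)
    assume "\<not> (finite A \<and> card A \<le> L)"
    then obtain S where S: "S \<subseteq> A" "finite S" "card S = L"
      using obtain_finite_subset_with_card_n[of A L] by fastforce
    have "(real L - 1) * (2 * sqrt (n * N))\<^sup>2 < 2 * real L * (sqrt (n * N'))\<^sup>2"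
    proof (rule card_separated_in_cball[of S y, unfolded \<open>card S = L\<close>])
      show "S \<subseteq> cball y (sqrt (n * N'))"
        using S A by blast
      show "2 * sqrt (n * N) < dist x z" if "x \<in> S" "z \<in> S" "x \<noteq> z" for x z
        using sep that S A by blast
    qed (use S assms(2,4) \<open>n > 0\<close> in auto)
    moreover have "(2 * sqrt (n * N))\<^sup>2 = 4 * (n * N)" "(sqrt (n * N'))\<^sup>2 = n * N'"
      using \<open>n > 0\<close> assms(2,5) by (simp_all add: power_mult_distrib)
    ultimately have "n * (2 * (real L - 1) * N) < n * (real L * N')"
      by (simp add: algebra_simps)
    then have "real L * N' > 2 * (real L - 1) * N"
      using \<open>n > 0\<close> by simp
    with assms(4,6) show False
      by (simp add: field_simps)
  qed
  then show ?thesis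
    using assms(3) unfolding multiple_packing_def n_def by blast
qed

end
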